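(* Let $\mathcal Q$ be a family of probability measures and $(M_t)_{t\in\mathbb N_0}$ a $\mathcal Q$-NM with $M_0=1$. Let $Y_t:=M_t/M_{t-1}$ (with $0/0:=1$). Assume that for every $\varepsilon>0$ there exists $\mathtt Q\in\mathcal Q$ such that $\mathtt Q(\sum_{t\in\mathbb N}(Y_t-1)^2=\infty)=1$ and, for every $t\in\mathbb N$ and every $\mathcal F_{t-1}$-measurable random variable $\beta>1$, $\mathtt E_{\mathtt Q}[Y_t\mathbf 1\{Y_t\ge\beta\}\mid\mathcal F_{t-1}]\le\beta(1+\varepsilon)\,\mathtt Q(Y_t\ge\beta\mid\mathcal F_{t-1})$ a.s. Then $\sup_{\mathtt Q\in\mathcal Q}\mathtt Q(\sup_{t\in\mathbb N_0}M_t\ge1/\alpha)=\alpha$ for every $\alpha\in(0,1]$.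
   Context: Filtration $\mathcal F_0=\sigma(U)$, $\mathcal F_t=\sigma(U,X_1,\dots,X_t)$ generated by an independent uniform $U$ and observations $(X_t)$. A $\mathcal Q$-NM is an adapted nonnegative process, $\mathtt Q$-integrable, with $\mathtt E_{\mathtt Q}[M_t\mid\mathcal F_s]=M_s$ $\mathtt Q$-a.s. for all $s\le t$ and all $\mathtt Q\in\mathcal Q$. *)

theory Defs
  imports "HOL-Probability.Probability"
begin

definition filt :: "'a measure \<Rightarrow> ('a \<Rightarrow> real) \<Rightarrow> 'b measure \<Rightarrow> (nat \<Rightarrow> 'a \<Rightarrow> 'b) \<Rightarrow> nat \<Rightarrow> 'a measure"
  where "filt \<Omega> U S X t = sigma (space \<Omega>)
     ({U -` B \<inter> space \<Omega> | B. B \<in> sets borel} \<union>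
      (\<Union>i\<in>{1..t}. {X i -` A \<inter> space \<Omega> | A. A \<in> sets S}))"

definition setting :: "'a measure \<Rightarrow> 'a measure set \<Rightarrow> ('a \<Rightarrow> real) \<Rightarrow> 'b measure \<Rightarrow> (nat \<Rightarrow> 'a \<Rightarrow> 'b) \<Rightarrow> bool"
  where "setting \<Omega> \<Q> U S X \<longleftrightarrow>
     U \<in> borel_measurable \<Omega> \<and> (\<forall>t. X t \<in> measurable \<Omega> S) \<and>
     (\<forall>Q\<in>\<Q>. prob_space Q \<and> sets Q = sets \<Omega> \<and> space Q = space \<Omega> \<and>
        distr Q lborel U = uniform_measure lborel {0..1} \<and>
        prob_space.indep_set Q {U -` B \<inter> space \<Omega> | B. B \<in> sets borel}
          (sigma_sets (space \<Omega>) (\<Union>i\<in>{1..}. {X i -` A \<inter> space \<Omega> | A. A \<in> sets S})))"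

definition is_QNM :: "'a measure \<Rightarrow> 'a measure set \<Rightarrow> ('a \<Rightarrow> real) \<Rightarrow> 'b measure \<Rightarrow> (nat \<Rightarrow> 'a \<Rightarrow> 'b) \<Rightarrow> (nat \<Rightarrow> 'a \<Rightarrow> real) \<Rightarrow> bool"
  where "is_QNM \<Omega> \<Q> U S X M \<longleftrightarrow>
     (\<forall>t. M t \<in> borel_measurable (filt \<Omega> U S X t)) \<and>
     (\<forall>t. \<forall>\<omega>\<in>space \<Omega>. M t \<omega> \<ge> 0) \<and>
     (\<forall>Q\<in>\<Q>. \<forall>t. integrable Q (M t)) \<and>
     (\<forall>Q\<in>\<Q>. \<forall>s t. s \<le> t \<longrightarrow>
        (AE \<omega> in Q. real_cond_exp Q (filt \<Omega> U S X s) (M t) \<omega> = M s \<omega>))"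

definition ratio :: "(nat \<Rightarrow> 'a \<Rightarrow> real) \<Rightarrow> nat \<Rightarrow> 'a \<Rightarrow> real"
  where "ratio M t \<omega> = (if M (t - 1) \<omega> = 0 \<and> M t \<omega> = 0 then 1 else M t \<omega> / M (t - 1) \<omega>)"

end

theory Submission imports Defs begin

(* The upper bound sup_Q Q(sup_t M_t \<ge> 1/\<alpha>) \<le> \<alpha> is Ville's inequality for
   each Q separately. For the lower bound put c = 1/\<alpha> and split the unit mass E[M_n] at the
   first time M reaches c: 1 = E[M_n; M stays below c up to n] + \<Sum>_t E[M_t; M first reaches c
   at t]. The overshoot hypothesis, applied with the predictable level \<beta> = c / M_{t-1}, bounds
   each first-passage term by c(1+\<epsilon>) times its probability. The remaining term tends to 0:
   sqrt M_n (1 + V_n/72), with V_n the truncated quadratic variation \<Sum> min 1 (Y_t - 1)^2,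
   is a supermartingale because the concavity gap of the square root dominates the growth
   of V, and V_n \<rightarrow> \<infinity> almost surely. Hence Q(sup M \<ge> c) \<ge> 1/(c(1+\<epsilon>)). *)

lemma sqrt_concavity_gap:
  fixes u L :: real
  assumes u: "0 \<le> u" and L: "1 \<le> L"
  shows "u * (L + min 1 ((u\<^sup>2 - 1)\<^sup>2) / 72) \<le> L * (1 + u\<^sup>2) / 2"
proof -
  have gap: "u * min 1 ((u\<^sup>2 - 1)\<^sup>2) / 72 \<le> (u - 1)\<^sup>2 / 2"
  proof (cases "u \<le> 2")
    case True
    have e: "(u\<^sup>2 - 1)\<^sup>2 = (u - 1)\<^sup>2 * (u + 1)\<^sup>2" by (simp add: power2_eq_square algebra_simps)
    have "(u + 1)\<^sup>2 \<le> 3\<^sup>2" using True u by (intro power_mono) auto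
    then have "(u\<^sup>2 - 1)\<^sup>2 \<le> (u - 1)\<^sup>2 * 9" unfolding e by (intro mult_left_mono) auto
    then have "u * min 1 ((u\<^sup>2 - 1)\<^sup>2) \<le> 2 * ((u - 1)\<^sup>2 * 9)"
      using True u by (intro mult_mono) auto
    then show ?thesis using zero_le_power2[of "u - 1"] by linarith
  next
    case False
    have "u * min 1 ((u\<^sup>2 - 1)\<^sup>2) \<le> u" using u by (intro mult_left_le) auto
    moreover have "u - 1 \<le> (u - 1)\<^sup>2" using False by (simp add: power2_eq_square)
    ultimately show ?thesis using False by linarith
  qed
  have "L * (1 + u\<^sup>2) / 2 - u * L = L * ((u - 1)\<^sup>2 / 2)" by (simp add: power2_eq_square algebra_simps)
  moreover have "(u - 1)\<^sup>2 / 2 \<le> L * ((u - 1)\<^sup>2 / 2)" using L by (simp add: mult_le_cancel_right1)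
  ultimately show ?thesis using gap by (simp add: algebra_simps)
qed

text \<open>With \<open>a = M\<^sub>n\<close> and \<open>b = M\<^sub>n\<^sub>+\<^sub>1\<close> the right-hand side is affine in \<open>b\<close> with
  coefficients known at time \<open>n\<close>; its conditional expectation is \<open>L * sqrt a\<close>.\<close>
lemma sqrt_step_bound:
  fixes a b L :: real
  assumes a: "0 < a" and b: "0 \<le> b" and L: "1 \<le> L"
  shows "sqrt b * (L + min 1 ((b / a - 1)\<^sup>2) / 72) \<le> L * sqrt a / 2 + L / (2 * sqrt a) * b"
proof -
  define u where "u = sqrt (b / a)"
  have u: "0 \<le> u" "u\<^sup>2 = b / a" using a b by (auto simp: u_def)
  have "sqrt b = sqrt a * u" using a b by (simp add: u_def real_sqrt_divide)
  then have "sqrt b * (L + min 1 ((b / a - 1)\<^sup>2) / 72) = sqrt a * (u * (L + min 1 ((u\<^sup>2 - 1)\<^sup>2) / 72))"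
    using u by simp
  also have "\<dots> \<le> sqrt a * (L * (1 + u\<^sup>2) / 2)"
    using sqrt_concavity_gap[OF u(1) L] a by (intro mult_left_mono) auto
  also have "\<dots> = L * sqrt a / 2 + L / (2 * sqrt a) * b"
  proof -
    have "s * (L * (1 + b / s\<^sup>2) / 2) = L * s / 2 + L / (2 * s) * b" if "0 < s" for s :: real
      using that by (simp add: field_simps power2_eq_square)
    then show ?thesis using a unfolding u(2) by (metis real_sqrt_gt_0_iff real_sqrt_pow2 less_imp_le)
  qed
  finally show ?thesis .
qed

lemma ennreal_le_of_div_one_plus:
  fixes S :: ennreal
  assumes "\<And>\<epsilon>::real. 0 < \<epsilon> \<Longrightarrow> ennreal (a / (1 + \<epsilon>)) \<le> S"
  shows "ennreal a \<le> S"
proof (rule tendsto_le[OF trivial_limit_at_right_real])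
  show "((\<lambda>_. S) \<longlongrightarrow> S) (at_right (0::real))" by simp
  have "((\<lambda>\<epsilon>::real. a / (1 + \<epsilon>)) \<longlongrightarrow> a / (1 + 0)) (at_right 0)"
    by (intro tendsto_intros) auto
  then show "((\<lambda>\<epsilon>. ennreal (a / (1 + \<epsilon>))) \<longlongrightarrow> ennreal a) (at_right (0::real))"
    by (intro tendsto_ennrealI) simp
  show "\<forall>\<^sub>F \<epsilon> in at_right 0. ennreal (a / (1 + \<epsilon>)) \<le> S"
    using assms by (auto simp: eventually_at_right_field intro: exI[of _ 1])
qed

lemma (in sigma_finite_subalgebra) nn_integral_mono_cond_exp:
  assumes [measurable]: "W \<in> borel_measurable F" "b \<in> borel_measurable F"
    "f \<in> borel_measurable M" "g \<in> borel_measurable M"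
    and le: "AE x in M. nn_cond_exp M F f x \<le> b x * nn_cond_exp M F g x"
  shows "(\<integral>\<^sup>+x. W x * f x \<partial>M) \<le> (\<integral>\<^sup>+x. W x * b x * g x \<partial>M)"
proof -
  have "(\<integral>\<^sup>+x. W x * f x \<partial>M) = (\<integral>\<^sup>+x. W x * nn_cond_exp M F f x \<partial>M)"
    by (rule nn_cond_exp_intg[symmetric]) auto
  also have "\<dots> \<le> (\<integral>\<^sup>+x. W x * b x * nn_cond_exp M F g x \<partial>M)"
    using le by (intro nn_integral_mono_AE) (auto elim!: AE_mp intro!: mult_left_mono simp: mult.assoc)
  also have "\<dots> = (\<integral>\<^sup>+x. W x * b x * g x \<partial>M)"
    by (rule nn_cond_exp_intg) auto
  finally show ?thesis .
qed

lemma suminf_ennreal_finite_if_truncated_bounded: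
  fixes a :: "nat \<Rightarrow> real"
  assumes a: "\<And>t. 0 \<le> a t" and bounded: "\<And>n. (\<Sum>t<n. min 1 (a t)) \<le> K"
  shows "(\<Sum>t. ennreal (a t)) \<noteq> \<infinity>"
proof -
  have summable_min: "summable (\<lambda>t. min 1 (a t))"
    by (rule summableI_nonneg_bounded[where x = K]) (use a bounded in auto)
  then have "(\<lambda>t. min 1 (a t)) \<longlonglongrightarrow> 0" by (rule summable_LIMSEQ_zero)
  then have "eventually (\<lambda>t. min 1 (a t) < 1) sequentially" by (rule order_tendstoD(2)) simp
  then have "eventually (\<lambda>t. a t = min 1 (a t)) sequentially"
    by eventually_elim (simp add: min_def split: if_splits)
  then have "summable a \<longleftrightarrow> summable (\<lambda>t. min 1 (a t))" by (rule summable_cong)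
  with summable_min have "summable a" by simp
  then show ?thesis by (simp add: suminf_ennreal2[OF a])
qed

definition bounded_overshoot ::
    "'a measure \<Rightarrow> (nat \<Rightarrow> 'a measure) \<Rightarrow> (nat \<Rightarrow> 'a \<Rightarrow> real) \<Rightarrow> real \<Rightarrow> nat \<Rightarrow> bool" where
  "bounded_overshoot Q F M \<epsilon> t \<longleftrightarrow> (\<forall>\<beta>::'a \<Rightarrow> real.
     \<beta> \<in> borel_measurable (F (t - 1)) \<and> (\<forall>\<omega>\<in>space Q. \<beta> \<omega> > 1) \<longrightarrow>
     (AE \<omega> in Q.
        nn_cond_exp Q (F (t - 1)) (\<lambda>x. ennreal (ratio M t x * indicator {y. ratio M t y \<ge> \<beta> y} x)) \<omega>
        \<le> ennreal (\<beta> \<omega> * (1 + \<epsilon>)) * nn_cond_exp Q (F (t - 1)) (\<lambda>x. indicator {y. ratio M t y \<ge> \<beta> y} x) \<omega>))"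

locale nonneg_martingale =
  fixes Q :: "'a measure" and F :: "nat \<Rightarrow> 'a measure" and M :: "nat \<Rightarrow> 'a \<Rightarrow> real"
  assumes prob_space: "prob_space Q"
    and subalgebra_filtration: "\<And>t. subalgebra Q (F t)"
    and filtration_mono: "\<And>s t. s \<le> t \<Longrightarrow> subalgebra (F t) (F s)"
    and adapted: "\<And>t. M t \<in> borel_measurable (F t)"
    and nonneg: "\<And>t x. x \<in> space Q \<Longrightarrow> 0 \<le> M t x"
    and integrable_M: "\<And>t. integrable Q (M t)"
    and martingale: "\<And>s t. s \<le> t \<Longrightarrow> AE x in Q. real_cond_exp Q (F s) (M t) x = M s x"
begin

interpretation prob_space Q by (rule prob_space)

lemma sigma_finite_filtration: "sigma_finite_subalgebra Q (F t)"
  by (rule finite_measure_subalgebra_is_sigma_finite)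
     (simp add: finite_measure_subalgebra_def finite_measure_subalgebra_axioms_def
       subalgebra_filtration finite_measure_axioms)

lemma measurable_filtration_mono: "f \<in> borel_measurable (F s) \<Longrightarrow> s \<le> t \<Longrightarrow> f \<in> borel_measurable (F t)"
  using measurable_from_subalg filtration_mono by blast

lemma measurable_filtration: "f \<in> borel_measurable (F s) \<Longrightarrow> f \<in> borel_measurable Q"
  using measurable_from_subalg subalgebra_filtration by blast

lemma sets_filtration: "A \<in> sets (F s) \<Longrightarrow> A \<in> sets Q"
  using subalgebra_filtration unfolding subalgebra_def by blast

lemma pred_filtration: "Measurable.pred (F t) P \<Longrightarrow> {x\<in>space Q. P x} \<in> sets (F t)"
  using subalgebra_filtration[of t] by (simp add: pred_def subalgebra_def)

lemma M_measurable[measurable]: "M s \<in> borel_measurable Q"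
  using measurable_filtration adapted by blast

lemma nn_integral_martingale:
  assumes "s \<le> t" and W: "W \<in> borel_measurable (F s)"
  shows "(\<integral>\<^sup>+x. W x * ennreal (M t x) \<partial>Q) = (\<integral>\<^sup>+x. W x * ennreal (M s x) \<partial>Q)"
proof -
  interpret sigma_finite_subalgebra Q "F s" by (rule sigma_finite_filtration)
  have set_integral_eq: "(\<integral>\<^sup>+x\<in>A. ennreal (M t x) \<partial>Q) = (\<integral>\<^sup>+x\<in>A. ennreal (M s x) \<partial>Q)"
    if A: "A \<in> sets (F s)" for A
  proof -
    have AQ: "A \<in> sets Q" using A sets_filtration by blast
    have int: "integrable Q (\<lambda>x. indicator A x * M r x)" for r
      using integrable_mult_indicator[OF AQ integrable_M[of r]] by simp
    have "(\<integral>x. indicator A x * M t x \<partial>Q) = (\<integral>x. indicator A x * real_cond_exp Q (F s) (M t) x \<partial>Q)"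
      by (rule real_cond_exp_intg(2)[symmetric]) (use int A in auto)
    also have "\<dots> = (\<integral>x. indicator A x * M s x \<partial>Q)"
      using AQ martingale[OF \<open>s \<le> t\<close>] by (intro integral_cong_AE) (measurable, auto elim!: AE_mp)
    finally have "ennreal (\<integral>x. indicator A x * M t x \<partial>Q) = ennreal (\<integral>x. indicator A x * M s x \<partial>Q)"
      by simp
    then have "(\<integral>\<^sup>+x. ennreal (indicator A x * M t x) \<partial>Q) = (\<integral>\<^sup>+x. ennreal (indicator A x * M s x) \<partial>Q)"
      using int by (subst (1 2) nn_integral_eq_integral) (auto simp: nonneg)
    then show ?thesis by (simp add: indicator_mult_ennreal mult.commute)
  qed
  have "AE x in Q. ennreal (M s x) = nn_cond_exp Q (F s) (\<lambda>x. ennreal (M t x)) x"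
    by (rule nn_cond_exp_charact) (use set_integral_eq adapted in auto)
  then have "(\<integral>\<^sup>+x. W x * ennreal (M s x) \<partial>Q)
      = (\<integral>\<^sup>+x. W x * nn_cond_exp Q (F s) (\<lambda>x. ennreal (M t x)) x \<partial>Q)"
    by (intro nn_integral_cong_AE) (auto elim!: AE_mp)
  also have "\<dots> = (\<integral>\<^sup>+x. W x * ennreal (M t x) \<partial>Q)"
    by (rule nn_cond_exp_intg) (use W in auto)
  finally show ?thesis by simp
qed

lemma AE_zero_absorbing:
  assumes "s \<le> t"
  shows "AE x in Q. M s x = 0 \<longrightarrow> M t x = 0"
proof -
  define Z where "Z = {x\<in>space Q. M s x = 0}"
  have [measurable]: "M s \<in> borel_measurable (F s)" by (rule adapted)
  have Z: "Z \<in> sets (F s)" unfolding Z_def by (rule pred_filtration) measurable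
  have "(\<integral>\<^sup>+x. indicator Z x * ennreal (M t x) \<partial>Q) = (\<integral>\<^sup>+x. indicator Z x * ennreal (M s x) \<partial>Q)"
    by (rule nn_integral_martingale) (use assms Z in auto)
  also have "\<dots> = (\<integral>\<^sup>+x. 0 \<partial>Q)" by (rule nn_integral_cong) (simp add: Z_def indicator_def)
  finally have "AE x in Q. indicator Z x * ennreal (M t x) = 0"
    using sets_filtration[OF Z] by (subst nn_integral_0_iff_AE[symmetric]) auto
  then show ?thesis using AE_space by eventually_elim (auto simp: Z_def nonneg)
qed

definition hit_by :: "real \<Rightarrow> nat \<Rightarrow> 'a set" where
  "hit_by c n = {x\<in>space Q. \<exists>k\<le>n. c \<le> M k x}"

definition first_hit :: "real \<Rightarrow> nat \<Rightarrow> 'a set" where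
  "first_hit c t = {x\<in>space Q. c \<le> M t x \<and> (\<forall>s<t. M s x < c)}"

lemma hit_by_filtration: "hit_by c n \<in> sets (F n)"
proof -
  have [measurable]: "k \<le> n \<Longrightarrow> M k \<in> borel_measurable (F n)" for k
    using measurable_filtration_mono adapted by blast
  have "hit_by c n = (\<Union>k\<in>{..n}. {x\<in>space Q. c \<le> M k x})" unfolding hit_by_def by auto
  also have "\<dots> \<in> sets (F n)" by (intro sets.finite_UN pred_filtration) auto
  finally show ?thesis .
qed

lemma hit_by_sets[measurable]: "hit_by c n \<in> sets Q"
  by (rule sets_filtration[OF hit_by_filtration])

lemma incseq_hit_by: "incseq (hit_by c)"
  unfolding incseq_def hit_by_def by (auto intro: order_trans)

lemma not_hit_by_filtration: "space Q - hit_by c n \<in> sets (F n)"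
  using hit_by_filtration sets.compl_sets subalgebra_filtration unfolding subalgebra_def by metis

lemma first_hit_Suc: "first_hit c (Suc n) = hit_by c (Suc n) - hit_by c n"
  unfolding first_hit_def hit_by_def by (auto simp: less_Suc_eq_le le_Suc_eq not_le)

lemma first_hit_sets[measurable]: "first_hit c (Suc n) \<in> sets Q"
  unfolding first_hit_Suc by measurable

lemma disjoint_first_hit: "disjoint_family (first_hit c)"
  unfolding disjoint_family_on_def first_hit_def by (auto simp: not_le) (meson linorder_neqE_nat not_le)

lemma maximal_inequality:
  assumes "0 \<le> c"
  shows "ennreal c * emeasure Q (hit_by c n) \<le> (\<integral>\<^sup>+x. indicator (hit_by c n) x * ennreal (M n x) \<partial>Q)"
proof (induction n)
  case 0
  have "ennreal c * emeasure Q (hit_by c 0) = (\<integral>\<^sup>+x. ennreal c * indicator (hit_by c 0) x \<partial>Q)"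
    by (simp add: nn_integral_cmult_indicator)
  also have "\<dots> \<le> (\<integral>\<^sup>+x. indicator (hit_by c 0) x * ennreal (M 0 x) \<partial>Q)"
    by (intro nn_integral_mono) (auto simp: hit_by_def indicator_def ennreal_leI)
  finally show ?case .
next
  case (Suc n)
  define A where "A = first_hit c (Suc n)"
  have hit_Suc: "hit_by c (Suc n) = hit_by c n \<union> A" and disj: "hit_by c n \<inter> A = {}"
    using incseq_hit_by[of c] unfolding A_def first_hit_Suc by (auto simp: incseq_Suc_iff)
  have "ennreal c * emeasure Q A = (\<integral>\<^sup>+x. ennreal c * indicator A x \<partial>Q)"
    unfolding A_def by (simp add: nn_integral_cmult_indicator)
  also have "\<dots> \<le> (\<integral>\<^sup>+x. indicator A x * ennreal (M (Suc n) x) \<partial>Q)"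
    by (intro nn_integral_mono) (auto simp: A_def first_hit_def indicator_def ennreal_leI)
  finally have A_le: "ennreal c * emeasure Q A \<le> \<dots>" .
  have "ennreal c * emeasure Q (hit_by c (Suc n))
      = ennreal c * emeasure Q (hit_by c n) + ennreal c * emeasure Q A"
    unfolding hit_Suc using disj by (simp add: A_def plus_emeasure[symmetric] distrib_left)
  also have "\<dots> \<le> (\<integral>\<^sup>+x. indicator (hit_by c n) x * ennreal (M n x) \<partial>Q)
      + (\<integral>\<^sup>+x. indicator A x * ennreal (M (Suc n) x) \<partial>Q)"
    by (intro add_mono Suc A_le)
  also have "(\<integral>\<^sup>+x. indicator (hit_by c n) x * ennreal (M n x) \<partial>Q)
      = (\<integral>\<^sup>+x. indicator (hit_by c n) x * ennreal (M (Suc n) x) \<partial>Q)"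
    by (rule nn_integral_martingale[symmetric]) (auto intro: borel_measurable_indicator hit_by_filtration)
  also have "\<dots> + (\<integral>\<^sup>+x. indicator A x * ennreal (M (Suc n) x) \<partial>Q)
      = (\<integral>\<^sup>+x. indicator (hit_by c (Suc n)) x * ennreal (M (Suc n) x) \<partial>Q)"
    unfolding hit_Suc using disj
    by (subst nn_integral_add[symmetric]) (auto simp: A_def indicator_def intro!: nn_integral_cong)
  finally show ?case .
qed

lemma ratio_measurable: "ratio M t \<in> borel_measurable (F t)"
proof -
  have [measurable]: "M (t - 1) \<in> borel_measurable (F t)" "M t \<in> borel_measurable (F t)"
    by (auto intro!: measurable_filtration_mono[OF adapted])
  show ?thesis unfolding ratio_def[abs_def] by measurable
qed

lemma ratio_measurable_Q[measurable]: "ratio M t \<in> borel_measurable Q"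
  by (rule measurable_filtration[OF ratio_measurable])

text \<open>On \<open>{0 < M\<^sub>p < c}\<close>, crossing \<open>c\<close> at time \<open>p + 1\<close> means \<open>Y\<^sub>p\<^sub>+\<^sub>1 \<ge> c / M\<^sub>p\<close>, so the
  overshoot hypothesis is applied with this level, weighted by \<open>M\<^sub>p\<close>.\<close>
lemma overshoot_from_positive:
  assumes c: "1 < c" and \<epsilon>: "0 \<le> \<epsilon>" and H: "bounded_overshoot Q F M \<epsilon> (Suc p)"
  defines "E \<equiv> first_hit c (Suc p) \<inter> {x\<in>space Q. 0 < M p x}"
  shows "(\<integral>\<^sup>+x. indicator E x * ennreal (M (Suc p) x) \<partial>Q) \<le> ennreal (c * (1 + \<epsilon>)) * emeasure Q E"
proof -
  interpret sigma_finite_subalgebra Q "F p" by (rule sigma_finite_filtration)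
  have [measurable]: "M p \<in> borel_measurable (F p)" by (rule adapted)
  define \<beta> where "\<beta> x = (if 0 < M p x \<and> M p x < c then c / M p x else 2)" for x
  define D where "D = (space Q - hit_by c p) \<inter> {x\<in>space Q. 0 < M p x}"
  define Y where "Y = ratio M (Suc p)"
  have \<beta>_F[measurable]: "\<beta> \<in> borel_measurable (F p)" unfolding \<beta>_def by measurable
  have [measurable]: "D \<in> sets (F p)"
    unfolding D_def by (intro sets.Int not_hit_by_filtration pred_filtration) measurable
  have [measurable]: "Y \<in> borel_measurable Q" "\<beta> \<in> borel_measurable Q"
    unfolding Y_def using measurable_filtration[OF \<beta>_F] by auto
  have ind_meas: "(\<lambda>x. indicator {y. \<beta> y \<le> Y y} x :: ennreal) \<in> borel_measurable Q"
    using borel_measurable_indicator_iff[of "{y. \<beta> y \<le> Y y}" Q] by (simp add: Int_def conj_commute)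
  have "(\<forall>\<omega>\<in>space Q. 1 < \<beta> \<omega>)" unfolding \<beta>_def by (auto simp: field_simps)
  then have AE_le: "AE \<omega> in Q. nn_cond_exp Q (F p) (\<lambda>x. ennreal (Y x * indicator {y. \<beta> y \<le> Y y} x)) \<omega>
      \<le> ennreal (\<beta> \<omega> * (1 + \<epsilon>)) * nn_cond_exp Q (F p) (indicator {y. \<beta> y \<le> Y y}) \<omega>"
    using H unfolding bounded_overshoot_def Y_def by auto
  have D_iff: "x \<in> D \<longleftrightarrow> x \<in> space Q \<and> 0 < M p x \<and> (\<forall>k\<le>p. M k x < c)" for x
    unfolding D_def hit_by_def by (auto simp: not_le) (meson not_le)
  have E_iff: "x \<in> E \<longleftrightarrow> x \<in> D \<and> c \<le> M (Suc p) x" for x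
    unfolding D_iff E_def first_hit_def by (auto simp: less_Suc_eq_le)
  have on_D: "x \<in> D \<Longrightarrow> Y x = M (Suc p) x / M p x \<and> \<beta> x = c / M p x
      \<and> (\<beta> x \<le> Y x \<longleftrightarrow> c \<le> M (Suc p) x)" for x
    unfolding D_iff \<beta>_def Y_def ratio_def by (auto simp: divide_le_cancel)
  have "(\<integral>\<^sup>+x. indicator E x * ennreal (M (Suc p) x) \<partial>Q)
      = (\<integral>\<^sup>+x. indicator D x * ennreal (M p x) * ennreal (Y x * indicator {y. \<beta> y \<le> Y y} x) \<partial>Q)"
  proof (rule nn_integral_cong)
    fix x assume x: "x \<in> space Q"
    show "indicator E x * ennreal (M (Suc p) x)
        = indicator D x * ennreal (M p x) * ennreal (Y x * indicator {y. \<beta> y \<le> Y y} x)"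
      using on_D[of x] E_iff[of x] nonneg[OF x]
      by (auto simp: indicator_def D_iff ennreal_mult[symmetric] simp del: ennreal_mult')
  qed
  also have "\<dots> \<le> (\<integral>\<^sup>+x. indicator D x * ennreal (M p x) * ennreal (\<beta> x * (1 + \<epsilon>))
      * indicator {y. \<beta> y \<le> Y y} x \<partial>Q)"
    by (rule nn_integral_mono_cond_exp[OF _ _ _ ind_meas AE_le]) auto
  also have "\<dots> = (\<integral>\<^sup>+x. ennreal (c * (1 + \<epsilon>)) * indicator E x \<partial>Q)"
  proof (rule nn_integral_cong)
    fix x assume x: "x \<in> space Q"
    have "x \<in> D \<Longrightarrow> M p x * (c / M p x * (1 + \<epsilon>)) = c * (1 + \<epsilon>)" by (simp add: D_iff)
    then show "indicator D x * ennreal (M p x) * ennreal (\<beta> x * (1 + \<epsilon>)) * indicator {y. \<beta> y \<le> Y y} x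
        = ennreal (c * (1 + \<epsilon>)) * indicator E x"
      using on_D[of x] E_iff[of x] c \<epsilon>
      by (auto simp: indicator_def D_iff ennreal_mult[symmetric] simp del: ennreal_mult')
  qed
  also have "\<dots> = ennreal (c * (1 + \<epsilon>)) * emeasure Q E"
    by (rule nn_integral_cmult_indicator) (unfold E_def, measurable)
  finally show ?thesis .
qed

lemma overshoot_bound:
  assumes "1 < c" and "0 \<le> \<epsilon>" and "bounded_overshoot Q F M \<epsilon> (Suc p)"
  shows "(\<integral>\<^sup>+x. indicator (first_hit c (Suc p)) x * ennreal (M (Suc p) x) \<partial>Q)
    \<le> ennreal (c * (1 + \<epsilon>)) * emeasure Q (first_hit c (Suc p))"
proof -
  define E where "E = first_hit c (Suc p) \<inter> {x\<in>space Q. 0 < M p x}"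
  have "(\<integral>\<^sup>+x. indicator (first_hit c (Suc p)) x * ennreal (M (Suc p) x) \<partial>Q)
      \<le> (\<integral>\<^sup>+x. indicator E x * ennreal (M (Suc p) x) \<partial>Q)"
    using AE_zero_absorbing[of p "Suc p"]
    by (intro nn_integral_mono_AE) (auto elim!: AE_mp simp: E_def first_hit_def indicator_def nonneg order_less_le)
  also have "\<dots> \<le> ennreal (c * (1 + \<epsilon>)) * emeasure Q E"
    unfolding E_def by (rule overshoot_from_positive[OF assms])
  also have "\<dots> \<le> ennreal (c * (1 + \<epsilon>)) * emeasure Q (first_hit c (Suc p))"
    by (intro mult_left_mono emeasure_mono) (auto simp: E_def)
  finally show ?thesis .
qed

definition trunc_qv :: "nat \<Rightarrow> 'a \<Rightarrow> real" where
  "trunc_qv n x = (\<Sum>t<n. min 1 ((ratio M (Suc t) x - 1)\<^sup>2))"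

definition lyapunov :: "nat \<Rightarrow> 'a \<Rightarrow> real" where
  "lyapunov n x = sqrt (M n x) * (1 + trunc_qv n x / 72)"

lemma trunc_qv_measurable: "trunc_qv n \<in> borel_measurable (F n)"
proof -
  have [measurable]: "t < n \<Longrightarrow> ratio M (Suc t) \<in> borel_measurable (F n)" for t
    by (auto intro: measurable_filtration_mono[OF ratio_measurable])
  show ?thesis unfolding trunc_qv_def[abs_def] by measurable
qed

lemma trunc_qv_measurable_Q[measurable]: "trunc_qv n \<in> borel_measurable Q"
  by (rule measurable_filtration[OF trunc_qv_measurable])

lemma trunc_qv_nonneg: "0 \<le> trunc_qv n x"
  unfolding trunc_qv_def by (intro sum_nonneg) auto

lemma trunc_qv_mono: "m \<le> n \<Longrightarrow> trunc_qv m x \<le> trunc_qv n x"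
  unfolding trunc_qv_def by (intro sum_mono2) auto

lemma trunc_qv_Suc:
  "M n x \<noteq> 0 \<Longrightarrow> trunc_qv (Suc n) x = trunc_qv n x + min 1 ((M (Suc n) x / M n x - 1)\<^sup>2)"
  by (simp add: trunc_qv_def ratio_def)

lemma INF_emeasure_trunc_qv_less:
  assumes "measure Q {x\<in>space Q. (\<Sum>t. ennreal ((ratio M (Suc t) x - 1)\<^sup>2)) = \<infinity>} = 1"
  shows "(INF n. emeasure Q {x\<in>space Q. trunc_qv n x < K}) = 0"
proof -
  define L where "L n = {x\<in>space Q. trunc_qv n x < K}" for n
  define H where "H = {x\<in>space Q. (\<Sum>t. ennreal ((ratio M (Suc t) x - 1)\<^sup>2)) = \<infinity>}"
  have [measurable]: "H \<in> sets Q" "L n \<in> sets Q" for n unfolding H_def L_def by measurable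
  have "decseq L"
    unfolding decseq_def L_def using trunc_qv_mono by (fastforce intro: le_less_trans)
  then have "(INF n. emeasure Q (L n)) = emeasure Q (\<Inter>n. L n)"
    by (rule INF_emeasure_decseq[rotated]) (auto simp: emeasure_eq_measure)
  also have "\<dots> \<le> emeasure Q (space Q - H)"
  proof (rule emeasure_mono)
    show "(\<Inter>n. L n) \<subseteq> space Q - H"
    proof
      fix x assume x: "x \<in> (\<Inter>n. L n)"
      then have "(\<Sum>t. ennreal ((ratio M (Suc t) x - 1)\<^sup>2)) \<noteq> \<infinity>"
        by (intro suminf_ennreal_finite_if_truncated_bounded[where K = K])
           (auto simp: L_def trunc_qv_def less_imp_le)
      with x show "x \<in> space Q - H" by (auto simp: H_def L_def)
    qed
  qed simp
  also have "\<dots> = 0"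
  proof -
    have "measure Q H = 1" using assms unfolding H_def .
    then show ?thesis using prob_compl[of H] by (simp add: emeasure_eq_measure)
  qed
  finally show ?thesis by (simp add: L_def)
qed

lemma lyapunov_nonneg: "x \<in> space Q \<Longrightarrow> 0 \<le> lyapunov n x"
  unfolding lyapunov_def using trunc_qv_nonneg[of n x] nonneg[of x n] by simp

lemma lyapunov_measurable[measurable]: "lyapunov n \<in> borel_measurable Q"
  unfolding lyapunov_def[abs_def] by measurable

lemma AE_lyapunov_Suc_le:
  "AE x in Q. lyapunov (Suc n) x
    \<le> lyapunov n x / 2 + (1 + trunc_qv n x / 72) / (2 * sqrt (M n x)) * M (Suc n) x"
  using AE_zero_absorbing[of n "Suc n", OF le_SucI[OF order.refl]] AE_space
proof eventually_elim
  case (elim x)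
  define L where "L = 1 + trunc_qv n x / 72"
  show ?case
  proof (cases "M n x = 0")
    case True
    then show ?thesis using elim by (simp add: lyapunov_def)
  next
    case False
    then have "0 < M n x" using nonneg[OF elim(2), of n] by simp
    moreover have "lyapunov (Suc n) x = sqrt (M (Suc n) x) * (L + min 1 ((M (Suc n) x / M n x - 1)\<^sup>2) / 72)"
      using False by (simp add: lyapunov_def trunc_qv_Suc L_def algebra_simps add_divide_distrib)
    moreover have "1 \<le> L" using trunc_qv_nonneg[of n x] by (simp add: L_def)
    moreover have "lyapunov n x = L * sqrt (M n x)" by (simp add: lyapunov_def L_def)
    ultimately show ?thesis
      unfolding L_def[symmetric] using sqrt_step_bound[of "M n x" "M (Suc n) x" L] nonneg[OF elim(2)] by simp
  qed
qed

lemma nn_integral_lyapunov_Suc_le: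
  "(\<integral>\<^sup>+x. ennreal (lyapunov (Suc n) x) \<partial>Q) \<le> (\<integral>\<^sup>+x. ennreal (lyapunov n x) \<partial>Q)"
proof -
  define W where "W x = (1 + trunc_qv n x / 72) / (2 * sqrt (M n x))" for x
  have [measurable]: "M n \<in> borel_measurable (F n)" "trunc_qv n \<in> borel_measurable (F n)"
    by (rule adapted, rule trunc_qv_measurable)
  have W_F[measurable]: "W \<in> borel_measurable (F n)" unfolding W_def by measurable
  have [measurable]: "W \<in> borel_measurable Q" by (rule measurable_filtration[OF W_F])
  have W_nonneg: "0 \<le> W x" if "x \<in> space Q" for x
    using trunc_qv_nonneg[of n x] nonneg[OF that] by (simp add: W_def)
  have "AE x in Q. ennreal (lyapunov (Suc n) x)
      \<le> ennreal (lyapunov n x / 2) + ennreal (W x) * ennreal (M (Suc n) x)"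
    using AE_lyapunov_Suc_le[of n, folded W_def] AE_space
  proof eventually_elim
    case (elim x)
    then show ?case
      using W_nonneg[OF elim(2)] nonneg[OF elim(2)] lyapunov_nonneg[OF elim(2), of n]
      by (simp add: ennreal_leI flip: ennreal_plus ennreal_mult)
  qed
  then have "(\<integral>\<^sup>+x. ennreal (lyapunov (Suc n) x) \<partial>Q)
      \<le> (\<integral>\<^sup>+x. ennreal (lyapunov n x / 2) + ennreal (W x) * ennreal (M (Suc n) x) \<partial>Q)"
    by (rule nn_integral_mono_AE)
  also have "\<dots> = (\<integral>\<^sup>+x. ennreal (lyapunov n x / 2) \<partial>Q)
      + (\<integral>\<^sup>+x. ennreal (W x) * ennreal (M (Suc n) x) \<partial>Q)"
    by (intro nn_integral_add) auto
  also have "(\<integral>\<^sup>+x. ennreal (W x) * ennreal (M (Suc n) x) \<partial>Q)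
      = (\<integral>\<^sup>+x. ennreal (W x) * ennreal (M n x) \<partial>Q)"
    by (rule nn_integral_martingale) auto
  also have "(\<integral>\<^sup>+x. ennreal (lyapunov n x / 2) \<partial>Q) + \<dots>
      = (\<integral>\<^sup>+x. ennreal (lyapunov n x / 2) + ennreal (W x) * ennreal (M n x) \<partial>Q)"
    by (intro nn_integral_add[symmetric]) auto
  also have "\<dots> = (\<integral>\<^sup>+x. ennreal (lyapunov n x) \<partial>Q)"
  proof (rule nn_integral_cong)
    fix x assume x: "x \<in> space Q"
    have "W x * M n x = (1 + trunc_qv n x / 72) * (M n x / sqrt (M n x)) / 2" by (simp add: W_def)
    also have "M n x / sqrt (M n x) = sqrt (M n x)" using nonneg[OF x] by (rule real_div_sqrt)
    finally have "W x * M n x = lyapunov n x / 2" by (simp add: lyapunov_def)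
    then show "ennreal (lyapunov n x / 2) + ennreal (W x) * ennreal (M n x) = ennreal (lyapunov n x)"
      using nonneg[OF x] W_nonneg[OF x] lyapunov_nonneg[OF x, of n] by (simp flip: ennreal_plus ennreal_mult)
  qed
  finally show ?thesis .
qed

end

locale unit_nonneg_martingale = nonneg_martingale +
  assumes start_one: "\<And>x. x \<in> space Q \<Longrightarrow> M 0 x = 1"
begin

interpretation prob_space Q by (rule prob_space)

lemma nn_integral_M: "(\<integral>\<^sup>+x. ennreal (M t x) \<partial>Q) = 1"
proof -
  have "(\<integral>\<^sup>+x. ennreal (M t x) \<partial>Q) = (\<integral>\<^sup>+x. 1 * ennreal (M 0 x) \<partial>Q)"
    using nn_integral_martingale[of 0 t "\<lambda>_. 1"] by simp
  also have "\<dots> = (\<integral>\<^sup>+x. 1 \<partial>Q)" by (rule nn_integral_cong) (simp add: start_one)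
  finally show ?thesis by (simp add: emeasure_space_1)
qed

lemma emeasure_hit_by_le:
  assumes c: "0 < c"
  shows "emeasure Q (hit_by c n) \<le> ennreal (1 / c)"
proof -
  have "ennreal c * emeasure Q (hit_by c n) \<le> (\<integral>\<^sup>+x. indicator (hit_by c n) x * ennreal (M n x) \<partial>Q)"
    using maximal_inequality c by simp
  also have "\<dots> \<le> (\<integral>\<^sup>+x. ennreal (M n x) \<partial>Q)" by (intro nn_integral_mono) (auto simp: indicator_def)
  finally have "ennreal (1 / c) * (ennreal c * emeasure Q (hit_by c n)) \<le> ennreal (1 / c) * 1"
    unfolding nn_integral_M by (rule mult_left_mono) simp
  moreover have "ennreal (1 / c) * ennreal c = 1" using c by (simp flip: ennreal_mult'')
  ultimately show ?thesis by (simp add: mult.assoc[symmetric])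
qed

lemma emeasure_sup_ge_le:
  assumes \<alpha>: "0 < \<alpha>"
  shows "emeasure Q {x\<in>space Q. ennreal (1 / \<alpha>) \<le> (SUP t. ennreal (M t x))} \<le> ennreal \<alpha>"
proof (rule ennreal_le_epsilon)
  fix d :: real assume d: "0 < d"
  define c where "c = 1 / (\<alpha> + d)"
  have c: "0 < c" "c < 1 / \<alpha>" using d \<alpha> by (auto simp: c_def field_simps)
  have "{x\<in>space Q. ennreal (1 / \<alpha>) \<le> (SUP t. ennreal (M t x))} \<subseteq> (\<Union>n. hit_by c n)"
  proof
    fix x assume x: "x \<in> {x\<in>space Q. ennreal (1 / \<alpha>) \<le> (SUP t. ennreal (M t x))}"
    have "ennreal c < ennreal (1 / \<alpha>)" using c \<alpha> by (intro ennreal_lessI) auto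
    also have "\<dots> \<le> (SUP t. ennreal (M t x))" using x by auto
    finally obtain t where "ennreal c < ennreal (M t x)" by (auto simp: less_SUP_iff)
    then show "x \<in> (\<Union>n. hit_by c n)" using x c by (auto simp: hit_by_def ennreal_less_iff intro!: exI[of _ t])
  qed
  then have "emeasure Q {x\<in>space Q. ennreal (1 / \<alpha>) \<le> (SUP t. ennreal (M t x))}
      \<le> emeasure Q (\<Union>n. hit_by c n)"
    by (rule emeasure_mono) measurable
  also have "\<dots> = (SUP n. emeasure Q (hit_by c n))"
    by (rule SUP_emeasure_incseq[symmetric]) (auto intro: incseq_hit_by)
  also have "\<dots> \<le> ennreal (1 / c)" by (rule SUP_least) (rule emeasure_hit_by_le[OF c(1)])
  also have "\<dots> = ennreal \<alpha> + ennreal d" using \<alpha> d by (simp add: c_def ennreal_plus)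
  finally show "emeasure Q {x\<in>space Q. ennreal (1 / \<alpha>) \<le> (SUP t. ennreal (M t x))}
      \<le> ennreal \<alpha> + ennreal d" .
qed

lemma stopped_decomposition:
  assumes c: "1 < c"
  shows "(\<integral>\<^sup>+x. indicator (space Q - hit_by c n) x * ennreal (M n x) \<partial>Q)
    + (\<Sum>t<n. \<integral>\<^sup>+x. indicator (first_hit c (Suc t)) x * ennreal (M (Suc t) x) \<partial>Q) = 1"
proof (induction n)
  case 0
  have "(\<integral>\<^sup>+x. indicator (space Q - hit_by c 0) x * ennreal (M 0 x) \<partial>Q) = (\<integral>\<^sup>+x. ennreal (M 0 x) \<partial>Q)"
    using c by (intro nn_integral_cong) (auto simp: hit_by_def start_one indicator_def)
  then show ?case by (simp add: nn_integral_M)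
next
  case (Suc n)
  have split: "space Q - hit_by c n = (space Q - hit_by c (Suc n)) \<union> first_hit c (Suc n)"
    and disj: "(space Q - hit_by c (Suc n)) \<inter> first_hit c (Suc n) = {}"
    by (auto simp: first_hit_Suc hit_by_def le_Suc_eq)
  have "(\<integral>\<^sup>+x. indicator (space Q - hit_by c n) x * ennreal (M n x) \<partial>Q)
      = (\<integral>\<^sup>+x. indicator (space Q - hit_by c n) x * ennreal (M (Suc n) x) \<partial>Q)"
    by (rule nn_integral_martingale[symmetric]) (auto intro: not_hit_by_filtration borel_measurable_indicator)
  also have "\<dots> = (\<integral>\<^sup>+x. indicator (space Q - hit_by c (Suc n)) x * ennreal (M (Suc n) x) \<partial>Q)
      + (\<integral>\<^sup>+x. indicator (first_hit c (Suc n)) x * ennreal (M (Suc n) x) \<partial>Q)"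
    unfolding split using disj
    by (subst nn_integral_add[symmetric]) (auto simp: indicator_def intro!: nn_integral_cong)
  finally show ?case using Suc.IH by (simp add: add_ac)
qed

lemma nn_integral_lyapunov_le_1: "(\<integral>\<^sup>+x. ennreal (lyapunov n x) \<partial>Q) \<le> 1"
proof (induction n)
  case 0
  have "(\<integral>\<^sup>+x. ennreal (lyapunov 0 x) \<partial>Q) = (\<integral>\<^sup>+x. 1 \<partial>Q)"
    by (rule nn_integral_cong) (simp add: lyapunov_def trunc_qv_def start_one)
  then show ?case by (simp add: emeasure_space_1)
next
  case (Suc n)
  then show ?case using nn_integral_lyapunov_Suc_le order_trans by blast
qed

text \<open>Below \<open>c\<close> we have \<open>M\<^sub>n \<le> sqrt c * sqrt M\<^sub>n\<close>, and where the truncated quadratic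
  variation exceeds \<open>K\<close> the factor \<open>sqrt M\<^sub>n\<close> is at most \<open>lyapunov n / (1 + K/72)\<close>.\<close>
lemma tail_bound:
  assumes K: "0 \<le> K" and c: "0 < c"
  shows "(\<integral>\<^sup>+x. indicator (space Q - hit_by c n) x * ennreal (M n x) \<partial>Q)
     \<le> ennreal c * emeasure Q {x\<in>space Q. trunc_qv n x < K} + ennreal (sqrt c / (1 + K / 72))"
proof -
  define L where "L = {x\<in>space Q. trunc_qv n x < K}"
  define k where "k = sqrt c / (1 + K / 72)"
  have k: "0 \<le> k" using K c by (simp add: k_def)
  have pointwise: "indicator (space Q - hit_by c n) x * ennreal (M n x)
      \<le> ennreal c * indicator L x + ennreal k * ennreal (lyapunov n x)" if x: "x \<in> space Q" for x
  proof (cases "x \<in> hit_by c n")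
    case False
    then have Mc: "M n x < c" using x by (auto simp: hit_by_def not_le)
    have below: "indicator (space Q - hit_by c n) x = (1::ennreal)" using False x by simp
    show ?thesis
    proof (cases "x \<in> L")
      case True
      have "ennreal (M n x) \<le> ennreal c" using Mc by (intro ennreal_leI) simp
      then show ?thesis using True below by (simp add: add_increasing2)
    next
      case False
      then have QK: "K \<le> trunc_qv n x" using x unfolding L_def by auto
      have M_nn: "0 \<le> M n x" using nonneg[OF x] .
      have "sqrt (M n x) * (1 + K / 72) \<le> lyapunov n x"
        unfolding lyapunov_def using QK K M_nn by (intro mult_left_mono) auto
      then have s: "sqrt (M n x) \<le> lyapunov n x / (1 + K / 72)" using K by (simp add: field_simps)
      have "M n x = sqrt (M n x) * sqrt (M n x)" using M_nn by simp
      also have "\<dots> \<le> sqrt c * sqrt (M n x)" using Mc M_nn by (intro mult_right_mono) auto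
      also have "\<dots> \<le> sqrt c * (lyapunov n x / (1 + K / 72))" using s c by (intro mult_left_mono) auto
      finally have "M n x \<le> k * lyapunov n x" by (simp add: k_def)
      then have "ennreal (M n x) \<le> ennreal k * ennreal (lyapunov n x)"
        using k lyapunov_nonneg[OF x] by (simp add: ennreal_leI flip: ennreal_mult)
      then show ?thesis using below by (simp add: add_increasing)
    qed
  qed simp
  have "(\<integral>\<^sup>+x. indicator (space Q - hit_by c n) x * ennreal (M n x) \<partial>Q)
      \<le> (\<integral>\<^sup>+x. ennreal c * indicator L x + ennreal k * ennreal (lyapunov n x) \<partial>Q)"
    by (rule nn_integral_mono) (rule pointwise)
  also have "\<dots> = ennreal c * emeasure Q L + ennreal k * (\<integral>\<^sup>+x. ennreal (lyapunov n x) \<partial>Q)"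
    unfolding L_def by (simp add: nn_integral_add nn_integral_cmult)
  also have "\<dots> \<le> ennreal c * emeasure Q L + ennreal k * 1"
    by (intro add_left_mono mult_left_mono nn_integral_lyapunov_le_1) auto
  finally show ?thesis by (simp add: L_def k_def)
qed

lemma tail_vanishes:
  assumes c: "0 < c" and e: "0 < e"
    and diverges: "measure Q {x\<in>space Q. (\<Sum>t. ennreal ((ratio M (Suc t) x - 1)\<^sup>2)) = \<infinity>} = 1"
  obtains n where "(\<integral>\<^sup>+x. indicator (space Q - hit_by c n) x * ennreal (M n x) \<partial>Q) \<le> ennreal e"
proof -
  define K where "K = 144 * sqrt c / e"
  have K: "0 < K" using c e by (simp add: K_def)
  have "sqrt c / (1 + K / 72) \<le> sqrt c / (K / 72)" using K c by (intro divide_left_mono) auto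
  also have "\<dots> = e / 2" using c e by (simp add: K_def field_simps)
  finally have small_k: "sqrt c / (1 + K / 72) \<le> e / 2" .
  have "(INF n. emeasure Q {x\<in>space Q. trunc_qv n x < K}) < ennreal (e / (2 * c))"
    using INF_emeasure_trunc_qv_less[OF diverges] e c by simp
  then obtain n where n: "emeasure Q {x\<in>space Q. trunc_qv n x < K} < ennreal (e / (2 * c))"
    by (auto simp: INF_less_iff)
  have "ennreal c * emeasure Q {x\<in>space Q. trunc_qv n x < K} \<le> ennreal c * ennreal (e / (2 * c))"
    using n by (intro mult_left_mono) auto
  also have "\<dots> = ennreal (e / 2)" using c e by (simp flip: ennreal_mult)
  finally have "(\<integral>\<^sup>+x. indicator (space Q - hit_by c n) x * ennreal (M n x) \<partial>Q)
      \<le> ennreal (e / 2) + ennreal (e / 2)"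
    using tail_bound[of K c n] K c small_k by (auto elim!: order_trans intro!: add_mono ennreal_leI)
  also have "\<dots> = ennreal e" using e by (simp flip: ennreal_plus)
  finally show ?thesis by (rule that)
qed

lemma emeasure_ever_hits_ge:
  assumes c: "1 < c" and \<epsilon>: "0 \<le> \<epsilon>"
    and diverges: "measure Q {x\<in>space Q. (\<Sum>t. ennreal ((ratio M (Suc t) x - 1)\<^sup>2)) = \<infinity>} = 1"
    and overshoot: "\<And>t. bounded_overshoot Q F M \<epsilon> (Suc t)"
  shows "1 \<le> ennreal (c * (1 + \<epsilon>)) * emeasure Q {x\<in>space Q. \<exists>t. c \<le> M t x}"
proof (rule ennreal_le_epsilon)
  fix e :: real assume "0 < e"
  then obtain n where tail: "(\<integral>\<^sup>+x. indicator (space Q - hit_by c n) x * ennreal (M n x) \<partial>Q) \<le> ennreal e"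
    using tail_vanishes[OF _ _ diverges] c by (metis less_trans zero_less_one)
  have disj: "disjoint_family_on (\<lambda>t. first_hit c (Suc t)) {..<n}"
    using disjoint_first_hit[of c] by (auto simp: disjoint_family_on_def)
  have "1 = (\<integral>\<^sup>+x. indicator (space Q - hit_by c n) x * ennreal (M n x) \<partial>Q)
      + (\<Sum>t<n. \<integral>\<^sup>+x. indicator (first_hit c (Suc t)) x * ennreal (M (Suc t) x) \<partial>Q)"
    by (rule stopped_decomposition[OF c, symmetric])
  also have "\<dots> \<le> ennreal e + (\<Sum>t<n. ennreal (c * (1 + \<epsilon>)) * emeasure Q (first_hit c (Suc t)))"
    by (intro add_mono tail sum_mono overshoot_bound[OF c \<epsilon> overshoot])
  also have "(\<Sum>t<n. ennreal (c * (1 + \<epsilon>)) * emeasure Q (first_hit c (Suc t)))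
      = ennreal (c * (1 + \<epsilon>)) * emeasure Q (\<Union>t<n. first_hit c (Suc t))"
    using disj by (simp add: sum_distrib_left[symmetric] sum_emeasure image_subset_iff)
  also have "\<dots> \<le> ennreal (c * (1 + \<epsilon>)) * emeasure Q {x\<in>space Q. \<exists>t. c \<le> M t x}"
    by (intro mult_left_mono emeasure_mono) (auto simp: first_hit_def)
  finally show "1 \<le> ennreal (c * (1 + \<epsilon>)) * emeasure Q {x\<in>space Q. \<exists>t. c \<le> M t x} + ennreal e"
    by (simp add: add.commute)
qed

lemma emeasure_sup_ge_lower:
  assumes \<alpha>: "0 < \<alpha>" "\<alpha> \<le> 1" and \<epsilon>: "0 < \<epsilon>"
    and diverges: "measure Q {x\<in>space Q. (\<Sum>t. ennreal ((ratio M (Suc t) x - 1)\<^sup>2)) = \<infinity>} = 1"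
    and overshoot: "\<And>t. bounded_overshoot Q F M \<epsilon> (Suc t)"
  shows "ennreal (\<alpha> / (1 + \<epsilon>)) \<le> emeasure Q {x\<in>space Q. ennreal (1 / \<alpha>) \<le> (SUP t. ennreal (M t x))}"
    (is "_ \<le> emeasure Q ?T")
proof (cases "\<alpha> = 1")
  case True
  have "1 \<le> (SUP t. ennreal (M t x))" if "x \<in> space Q" for x
    using SUP_upper[of 0 UNIV "\<lambda>t. ennreal (M t x)"] start_one[OF that] by simp
  then have "?T = space Q" using True by auto
  then show ?thesis using True \<epsilon> by (simp add: emeasure_space_1)
next
  case False
  define c where "c = 1 / \<alpha>"
  have c: "1 < c" using \<alpha> False by (simp add: c_def)
  have "{x\<in>space Q. \<exists>t. c \<le> M t x} \<subseteq> ?T"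
  proof
    fix x assume "x \<in> {x\<in>space Q. \<exists>t. c \<le> M t x}"
    then obtain t where x: "x \<in> space Q" and t: "c \<le> M t x" by auto
    have "ennreal (1 / \<alpha>) \<le> ennreal (M t x)" using t by (simp add: c_def ennreal_leI)
    also have "\<dots> \<le> (SUP t. ennreal (M t x))" by (rule SUP_upper) simp
    finally show "x \<in> ?T" using x by simp
  qed
  then have "1 \<le> ennreal (c * (1 + \<epsilon>)) * emeasure Q ?T"
    using emeasure_ever_hits_ge[OF c _ diverges overshoot] \<epsilon>
    by (auto elim!: order_trans intro!: mult_left_mono emeasure_mono)
  then have "ennreal (1 / (c * (1 + \<epsilon>))) * 1
      \<le> ennreal (1 / (c * (1 + \<epsilon>))) * (ennreal (c * (1 + \<epsilon>)) * emeasure Q ?T)"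
    by (rule mult_left_mono) simp
  also have "\<dots> = emeasure Q ?T"
    using c \<epsilon> by (simp add: mult.assoc[symmetric] flip: ennreal_mult)
  also have "1 / (c * (1 + \<epsilon>)) = \<alpha> / (1 + \<epsilon>)" by (simp add: c_def)
  finally show ?thesis by simp
qed

end

lemma space_filt: "space (filt \<Omega> U S X t) = space \<Omega>"
  unfolding filt_def by (simp add: space_measure_of_conv)

lemma sets_filt: "sets (filt \<Omega> U S X t) = sigma_sets (space \<Omega>)
    ({U -` B \<inter> space \<Omega> | B. B \<in> sets borel} \<union> (\<Union>i\<in>{1..t}. {X i -` A \<inter> space \<Omega> | A. A \<in> sets S}))"
  unfolding filt_def by (rule sets_measure_of) auto

lemma sets_filt_mono: "s \<le> t \<Longrightarrow> sets (filt \<Omega> U S X s) \<subseteq> sets (filt \<Omega> U S X t)"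
  unfolding sets_filt by (intro sigma_sets_mono' Un_mono UN_mono order_refl) auto

lemma sets_filt_subset:
  assumes "U \<in> borel_measurable \<Omega>" and "\<And>t. X t \<in> measurable \<Omega> S"
  shows "sets (filt \<Omega> U S X t) \<subseteq> sets \<Omega>"
  unfolding sets_filt using assms by (intro sets.sigma_sets_subset) (auto intro: measurable_sets)

lemma unit_nonneg_martingale_filt:
  assumes setting: "setting \<Omega> \<Q> U S X" and QNM: "is_QNM \<Omega> \<Q> U S X M"
    and start: "\<forall>\<omega>\<in>space \<Omega>. M 0 \<omega> = 1" and Q: "Q \<in> \<Q>"
  shows "unit_nonneg_martingale Q (filt \<Omega> U S X) M"
proof -
  have Q_\<Omega>: "prob_space Q" "sets Q = sets \<Omega>" "space Q = space \<Omega>"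
    using setting Q by (auto simp: setting_def)
  have sets_sub: "sets (filt \<Omega> U S X t) \<subseteq> sets \<Omega>" for t
    using setting by (intro sets_filt_subset) (auto simp: setting_def)
  show ?thesis
  proof (intro unit_nonneg_martingale.intro nonneg_martingale.intro unit_nonneg_martingale_axioms.intro)
    show "prob_space Q" by (rule Q_\<Omega>(1))
    show "subalgebra Q (filt \<Omega> U S X t)" for t
      unfolding subalgebra_def using Q_\<Omega> sets_sub by (simp add: space_filt)
    show "subalgebra (filt \<Omega> U S X t) (filt \<Omega> U S X s)" if "s \<le> t" for s t
      unfolding subalgebra_def using sets_filt_mono[OF that] by (simp add: space_filt)
    show "M t \<in> borel_measurable (filt \<Omega> U S X t)" for t
      using QNM by (simp add: is_QNM_def)
    show "0 \<le> M t x" if "x \<in> space Q" for t x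
      using QNM that Q_\<Omega> by (simp add: is_QNM_def)
    show "integrable Q (M t)" for t
      using QNM Q by (simp add: is_QNM_def)
    show "AE x in Q. real_cond_exp Q (filt \<Omega> U S X s) (M t) x = M s x" if "s \<le> t" for s t
      using QNM Q that by (simp add: is_QNM_def)
    show "M 0 x = 1" if "x \<in> space Q" for x
      using start that Q_\<Omega> by simp
  qed
qed

theorem corollary5:
  fixes \<Omega> :: "'a measure" and \<Q> :: "'a measure set" and U :: "'a \<Rightarrow> real"
    and S :: "'b measure" and X :: "nat \<Rightarrow> 'a \<Rightarrow> 'b" and M :: "nat \<Rightarrow> 'a \<Rightarrow> real"
  assumes "setting \<Omega> \<Q> U S X"
    and "is_QNM \<Omega> \<Q> U S X M"
    and "\<forall>\<omega>\<in>space \<Omega>. M 0 \<omega> = 1"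
    and "\<forall>\<epsilon>::real. \<epsilon> > 0 \<longrightarrow> (\<exists>Q\<in>\<Q>.
           measure Q {\<omega>\<in>space Q. (\<Sum>t. ennreal ((ratio M (Suc t) \<omega> - 1)\<^sup>2)) = \<infinity>} = 1 \<and>
           (\<forall>t::nat. t \<ge> 1 \<longrightarrow> (\<forall>\<beta>::'a \<Rightarrow> real.
              \<beta> \<in> borel_measurable (filt \<Omega> U S X (t - 1)) \<and> (\<forall>\<omega>\<in>space \<Omega>. \<beta> \<omega> > 1) \<longrightarrow>
              (AE \<omega> in Q.
                 nn_cond_exp Q (filt \<Omega> U S X (t - 1))
                   (\<lambda>x. ennreal (ratio M t x * indicator {y. ratio M t y \<ge> \<beta> y} x)) \<omega>
                 \<le> ennreal (\<beta> \<omega> * (1 + \<epsilon>)) *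
                   nn_cond_exp Q (filt \<Omega> U S X (t - 1))
                   (\<lambda>x. indicator {y. ratio M t y \<ge> \<beta> y} x) \<omega>))))"
  shows "\<forall>\<alpha>::real. 0 < \<alpha> \<and> \<alpha> \<le> 1 \<longrightarrow>
           (SUP Q\<in>\<Q>. emeasure Q {\<omega>\<in>space Q. (SUP t. ennreal (M t \<omega>)) \<ge> ennreal (1 / \<alpha>)})
             = ennreal \<alpha>"
proof (intro allI impI)
  fix \<alpha> :: real assume \<alpha>: "0 < \<alpha> \<and> \<alpha> \<le> 1"
  let ?T = "\<lambda>Q. {\<omega>\<in>space Q. (SUP t. ennreal (M t \<omega>)) \<ge> ennreal (1 / \<alpha>)}"
  have mart: "unit_nonneg_martingale Q (filt \<Omega> U S X) M" if "Q \<in> \<Q>" for Q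
    by (rule unit_nonneg_martingale_filt[OF assms(1-3) that])
  have space: "space Q = space \<Omega>" if "Q \<in> \<Q>" for Q
    using assms(1) that by (simp add: setting_def)
  have "(SUP Q\<in>\<Q>. emeasure Q (?T Q)) \<le> ennreal \<alpha>"
    using unit_nonneg_martingale.emeasure_sup_ge_le[OF mart] \<alpha> by (auto intro: SUP_least)
  moreover have "ennreal \<alpha> \<le> (SUP Q\<in>\<Q>. emeasure Q (?T Q))"
  proof (rule ennreal_le_of_div_one_plus)
    fix \<epsilon> :: real assume \<epsilon>: "0 < \<epsilon>"
    have "\<exists>Q\<in>\<Q>. measure Q {\<omega>\<in>space Q. (\<Sum>t. ennreal ((ratio M (Suc t) \<omega> - 1)\<^sup>2)) = \<infinity>} = 1
        \<and> (\<forall>t\<ge>1. bounded_overshoot Q (filt \<Omega> U S X) M \<epsilon> t)"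
      using assms(4)[rule_format, OF \<epsilon>] by (simp add: bounded_overshoot_def space cong: bex_cong)
    then show "ennreal (\<alpha> / (1 + \<epsilon>)) \<le> (SUP Q\<in>\<Q>. emeasure Q (?T Q))"
      using unit_nonneg_martingale.emeasure_sup_ge_lower[OF mart _ _ \<epsilon>] \<alpha>
      by (fastforce intro: SUP_upper2)
  qed
  ultimately show "(SUP Q\<in>\<Q>. emeasure Q (?T Q)) = ennreal \<alpha>" by (rule antisym)
qed

end
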